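(* Let $(\xi_n)_{n\ge0}$ be a real-valued process adapted to a filtration $(\mathcal F_n)_{n\ge0}$, and suppose there exist $a\in\mathbb R$ and $b>0$ such that: (1) $\mathbb E\big((\xi_{k+1}-\xi_k)1_{\{\xi_k\ge a\}}\mid\mathcal F_k\big)\le 0$ a.s. for all $k$; (2) $\limsup_{k\to\infty}1_{\{\xi_k<a<\xi_{k+1}\}}(\xi_{k+1}-a)\le b$ almost surely; (3) $\sum_k\mathbb E\big[(\xi_{k+1}-\xi_k)^2 1_{\{\xi_k\ge a\}}\big]<\infty$. Let $A^\pm_a$ be the event that $\xi_n-a$ switches sign infinitely often. Then almost surely on $A^\pm_a$ we have $\limsup_{n\to\infty}\xi_n\le a+b$. *)

theory Defs
  imports "HOL-Probability.Probability"
begin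

definition filtration_of :: "'a measure \<Rightarrow> (nat \<Rightarrow> 'a measure) \<Rightarrow> bool" where
  "filtration_of M F \<longleftrightarrow> (\<forall>n. subalgebra M (F n)) \<and> (\<forall>n m. n \<le> m \<longrightarrow> sets (F n) \<subseteq> sets (F m))"

definition adapted_to :: "(nat \<Rightarrow> 'a measure) \<Rightarrow> (nat \<Rightarrow> 'a \<Rightarrow> real) \<Rightarrow> bool" where
  "adapted_to F X \<longleftrightarrow> (\<forall>n. X n \<in> borel_measurable (F n))"

definition sign_switch_io :: "(nat \<Rightarrow> 'a \<Rightarrow> real) \<Rightarrow> real \<Rightarrow> 'a \<Rightarrow> bool" where
  "sign_switch_io X a \<omega> \<longleftrightarrow> infinite {n. X n \<omega> < a} \<and> infinite {n. X n \<omega> > a}"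

end

theory Submission
  imports Defs
begin

(* Put  D_k = (xi_{k+1} - xi_k) 1{xi_k >= a}  and  C_k = E(D_k | F_k), so that
   C_k <= 0 a.s. by hypothesis (1), and  Y_k = D_k - C_k.  Whenever xi_k >= a we have
   xi_{k+1} - xi_k = D_k <= Y_k.  The Y_k are square-integrable martingale differences with
   sum_k E Y_k^2 <= 4 sum_k E D_k^2 < infinity (hypothesis (3)), so by Kolmogorov's maximal
   inequality their partial sums are a.s. Cauchy.  On such a path, once xi has dropped below a
   late enough, every later excursion above a starts at most a + b + e (hypothesis (2)) and can
   only grow by a tail sum of the Y_k, which is less than e; this gives limsup xi_n <= a + b. *)

lemma integrable_mult_of_square_integrable:
  fixes f g :: "'a \<Rightarrow> real"
  assumes "integrable M (\<lambda>x. (f x)\<^sup>2)" "integrable M (\<lambda>x. (g x)\<^sup>2)"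
    "f \<in> borel_measurable M" "g \<in> borel_measurable M"
  shows "integrable M (\<lambda>x. f x * g x)"
proof (rule Bochner_Integration.integrable_bound[of _ "\<lambda>x. (f x)\<^sup>2 + (g x)\<^sup>2"])
  show "integrable M (\<lambda>x. (f x)\<^sup>2 + (g x)\<^sup>2)" using assms by auto
  show "(\<lambda>x. f x * g x) \<in> borel_measurable M" using assms by auto
  have "\<bar>f x * g x\<bar> \<le> (f x)\<^sup>2 + (g x)\<^sup>2" for x
  proof -
    have "0 \<le> (\<bar>f x\<bar> - \<bar>g x\<bar>)\<^sup>2" by simp
    then have "\<bar>f x\<bar> * \<bar>g x\<bar> * 2 \<le> (f x)\<^sup>2 + (g x)\<^sup>2" by (simp add: power2_eq_square algebra_simps)
    moreover have "0 \<le> \<bar>f x\<bar> * \<bar>g x\<bar>" by simp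
    ultimately show ?thesis unfolding abs_mult by linarith
  qed
  then show "AE x in M. norm (f x * g x) \<le> norm ((f x)\<^sup>2 + (g x)\<^sup>2)" by auto
qed

lemma square_integrable_diff:
  fixes f g :: "'a \<Rightarrow> real"
  assumes f_sq: "integrable M (\<lambda>x. (f x)\<^sup>2)" and g_sq: "integrable M (\<lambda>x. (g x)\<^sup>2)"
    and f_meas: "f \<in> borel_measurable M" and g_meas: "g \<in> borel_measurable M"
  shows "integrable M (\<lambda>x. (f x - g x)\<^sup>2)"
proof -
  have "(\<lambda>x. (f x - g x)\<^sup>2) = (\<lambda>x. (f x)\<^sup>2 + (g x)\<^sup>2 - 2 * (f x * g x))"
    by (auto simp: power2_eq_square algebra_simps)
  then show ?thesis
    using f_sq g_sq integrable_mult_of_square_integrable[OF f_sq g_sq f_meas g_meas] by simp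
qed

lemma (in finite_measure) integrable_of_square_integrable:
  fixes f :: "'a \<Rightarrow> real"
  assumes "integrable M (\<lambda>x. (f x)\<^sup>2)" "f \<in> borel_measurable M"
  shows "integrable M f"
proof (rule Bochner_Integration.integrable_bound[of _ "\<lambda>x. 1 + (f x)\<^sup>2"])
  show "integrable M (\<lambda>x. 1 + (f x)\<^sup>2)" using assms by auto
  have "\<bar>f x\<bar> \<le> 1 + (f x)\<^sup>2" for x
  proof -
    have "0 \<le> (\<bar>f x\<bar> - 1)\<^sup>2" by simp
    then show ?thesis by (simp add: power2_eq_square algebra_simps)
  qed
  then show "AE x in M. norm (f x) \<le> norm (1 + (f x)\<^sup>2)" by auto
qed (use assms in auto)

lemma square_mult_bounded_factor_le:
  fixes c y :: real
  assumes "\<bar>c\<bar> \<le> 1"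
  shows "(c * y)\<^sup>2 \<le> y\<^sup>2"
proof -
  have "c\<^sup>2 \<le> 1" using assms by (simp add: abs_square_le_1)
  then have "c\<^sup>2 * y\<^sup>2 \<le> 1 * y\<^sup>2" by (intro mult_right_mono) auto
  then show ?thesis by (simp add: power_mult_distrib)
qed

lemma filtration_measurable_mono:
  assumes "filtration_of M F" "j \<le> k" "f \<in> borel_measurable (F j)"
  shows "f \<in> borel_measurable (F k)"
proof -
  have "subalgebra (F k) (F j)" using assms(1,2) unfolding filtration_of_def subalgebra_def by auto
  then show ?thesis using measurable_from_subalg assms(3) by blast
qed

lemma filtration_measurable_space:
  assumes "filtration_of M F" "f \<in> borel_measurable (F j)"
  shows "f \<in> borel_measurable M"
  using assms measurable_from_subalg unfolding filtration_of_def by blast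

lemma (in prob_space) filtration_sigma_finite_subalgebra:
  assumes "filtration_of M F"
  shows "sigma_finite_subalgebra M (F k)"
  by (rule finite_measure_subalgebra_is_sigma_finite)
    (unfold_locales, use assms in \<open>auto simp: filtration_of_def\<close>)

text \<open>Stopping a sum at the first index where its modulus reaches \<open>lam\<close>: if this happens
  before \<open>n\<close>, then the stopped sum up to \<open>n\<close> still has modulus at least \<open>lam\<close>.  The stopping
  indicator is written as a product so that it is visibly measurable.\<close>
lemma stopped_sum_reaches_level:
  fixes w :: "nat \<Rightarrow> real"
  assumes "i \<le> n" "lam \<le> \<bar>\<Sum>k<i. w k\<bar>"
  shows "lam \<le> \<bar>\<Sum>k<n. (\<Prod>j\<in>{..k}. if \<bar>\<Sum>l<j. w l\<bar> < lam then 1 else 0) * w k\<bar>"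
proof -
  define \<tau> where "\<tau> = (LEAST i. lam \<le> \<bar>\<Sum>k<i. w k\<bar>)"
  have reached: "lam \<le> \<bar>\<Sum>k<\<tau>. w k\<bar>" unfolding \<tau>_def by (rule LeastI[of _ i]) (rule assms(2))
  have "\<tau> \<le> n" unfolding \<tau>_def using Least_le[of _ i] assms by fastforce
  have indicator: "(\<Prod>j\<in>{..k}. if \<bar>\<Sum>l<j. w l\<bar> < lam then 1 else (0::real))
      = (if k < \<tau> then 1 else 0)" for k
  proof (cases "k < \<tau>")
    case True
    have "\<bar>\<Sum>l<j. w l\<bar> < lam" if "j \<in> {..k}" for j
    proof -
      have "j < \<tau>" using that True by auto
      then show ?thesis unfolding \<tau>_def using not_less_Least by fastforce
    qed
    then show ?thesis using True by simp
  next
    case False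
    then have "\<exists>j\<in>{..k}. (if \<bar>\<Sum>l<j. w l\<bar> < lam then 1 else (0::real)) = 0"
      using reached by (intro bexI[of _ \<tau>]) auto
    then show ?thesis using False by (simp add: prod_zero)
  qed
  have "(\<Sum>k<n. (if k < \<tau> then 1 else 0) * w k) = (\<Sum>k<\<tau>. w k)"
    using \<open>\<tau> \<le> n\<close> by (induction n) (auto simp: le_Suc_eq)
  then show ?thesis unfolding indicator using reached by simp
qed

locale orthogonal_increments = prob_space M for M :: "'a measure" +
  fixes F :: "nat \<Rightarrow> 'a measure" and W :: "nat \<Rightarrow> 'a \<Rightarrow> real"
  assumes filtration: "filtration_of M F"
    and increment_measurable: "\<And>k. W k \<in> borel_measurable (F (Suc k))"
    and increment_square_integrable: "\<And>k. integrable M (\<lambda>x. (W k x)\<^sup>2)"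
    and increment_orthogonal: "\<And>k Z. Z \<in> borel_measurable (F k) \<Longrightarrow> integrable M (\<lambda>x. (Z x)\<^sup>2)
      \<Longrightarrow> (\<integral>x. Z x * W k x \<partial>M) = 0"
begin

lemma increment_measurable_space: "W k \<in> borel_measurable M"
  using filtration_measurable_space[OF filtration increment_measurable] .

lemma partial_sum_pythagoras:
  "(\<lambda>x. \<Sum>k<n. W k x) \<in> borel_measurable (F n) \<and> integrable M (\<lambda>x. (\<Sum>k<n. W k x)\<^sup>2)
   \<and> (\<integral>x. (\<Sum>k<n. W k x)\<^sup>2 \<partial>M) = (\<Sum>k<n. \<integral>x. (W k x)\<^sup>2 \<partial>M)"
proof (induction n)
  case 0
  then show ?case by simp
next
  case (Suc n)
  let ?S = "\<lambda>x. \<Sum>k<n. W k x"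
  have S_meas: "?S \<in> borel_measurable (F n)" and S_sq: "integrable M (\<lambda>x. (?S x)\<^sup>2)"
    and S_moment: "(\<integral>x. (?S x)\<^sup>2 \<partial>M) = (\<Sum>k<n. \<integral>x. (W k x)\<^sup>2 \<partial>M)" using Suc by auto
  have "?S \<in> borel_measurable M" using filtration_measurable_space[OF filtration S_meas] .
  then have cross_int: "integrable M (\<lambda>x. ?S x * W n x)"
    using integrable_mult_of_square_integrable[OF S_sq increment_square_integrable]
      increment_measurable_space by blast
  have cross_zero: "(\<integral>x. ?S x * W n x \<partial>M) = 0" using increment_orthogonal[OF S_meas S_sq] .
  have square: "(\<lambda>x. (\<Sum>k<Suc n. W k x)\<^sup>2) = (\<lambda>x. (?S x)\<^sup>2 + 2 * (?S x * W n x) + (W n x)\<^sup>2)"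
    by (auto simp: power2_eq_square algebra_simps)
  have "(\<lambda>x. \<Sum>k<Suc n. W k x) \<in> borel_measurable (F (Suc n))"
    using filtration_measurable_mono[OF filtration _ S_meas, of "Suc n"] increment_measurable[of n]
    by simp
  moreover have "integrable M (\<lambda>x. (\<Sum>k<Suc n. W k x)\<^sup>2)"
    unfolding square using S_sq cross_int increment_square_integrable by auto
  moreover have "(\<integral>x. (\<Sum>k<Suc n. W k x)\<^sup>2 \<partial>M) = (\<Sum>k<Suc n. \<integral>x. (W k x)\<^sup>2 \<partial>M)"
    unfolding square using S_sq cross_int increment_square_integrable[of n] cross_zero S_moment
    by simp
  ultimately show ?case by blast
qed

text \<open>Multiplying the increments by an adapted (predictable) factor bounded by 1 preserves
  orthogonality; this is how the increments are stopped.\<close>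
lemma bounded_transform:
  assumes I_meas: "\<And>k. I k \<in> borel_measurable (F k)" and I_bounded: "\<And>k x. \<bar>I k x\<bar> \<le> 1"
  shows "orthogonal_increments M F (\<lambda>k x. I k x * W k x)"
proof
  show "filtration_of M F" by (rule filtration)
  fix k
  show "(\<lambda>x. I k x * W k x) \<in> borel_measurable (F (Suc k))"
    using filtration_measurable_mono[OF filtration _ I_meas[of k], of "Suc k"]
      increment_measurable[of k] by auto
  have I_space: "I k \<in> borel_measurable M"
    using filtration_measurable_space[OF filtration I_meas] .
  show "integrable M (\<lambda>x. (I k x * W k x)\<^sup>2)"
    by (rule Bochner_Integration.integrable_bound[OF increment_square_integrable[of k]])
      (use I_space increment_measurable_space square_mult_bounded_factor_le[OF I_bounded] in auto)
  fix Z :: "'a \<Rightarrow> real"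
  assume Z_meas: "Z \<in> borel_measurable (F k)" and Z_sq: "integrable M (\<lambda>x. (Z x)\<^sup>2)"
  have Z_space: "Z \<in> borel_measurable M" using filtration_measurable_space[OF filtration Z_meas] .
  have "(\<integral>x. (I k x * Z x) * W k x \<partial>M) = 0"
  proof (rule increment_orthogonal)
    show "(\<lambda>x. I k x * Z x) \<in> borel_measurable (F k)" using Z_meas I_meas[of k] by auto
    show "integrable M (\<lambda>x. (I k x * Z x)\<^sup>2)"
      by (rule Bochner_Integration.integrable_bound[OF Z_sq])
        (use I_space Z_space square_mult_bounded_factor_le[OF I_bounded] in auto)
  qed
  then show "(\<integral>x. Z x * (I k x * W k x) \<partial>M) = 0" by (simp add: ac_simps)
qed

lemma kolmogorov_maximal_inequality:
  assumes lam: "lam > 0"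
  shows "measure M (\<Union>i\<in>{..n}. {x\<in>space M. lam \<le> \<bar>\<Sum>k<i. W k x\<bar>})
     \<le> (\<Sum>k<n. \<integral>x. (W k x)\<^sup>2 \<partial>M) / lam\<^sup>2"
proof -
  define I where "I k x = (\<Prod>j\<in>{..k}. if \<bar>\<Sum>l<j. W l x\<bar> < lam then 1 else (0::real))" for k x
  have I_meas: "I k \<in> borel_measurable (F k)" for k
  proof -
    have partial_sums: "(\<lambda>x. \<Sum>l<j. W l x) \<in> borel_measurable (F k)" if "j \<in> {..k}" for j
      using filtration_measurable_mono[OF filtration _ conjunct1[OF partial_sum_pythagoras[of j]]]
        that by auto
    show ?thesis unfolding I_def
      by (intro borel_measurable_prod) (use partial_sums in measurable)
  qed
  have I_bounded: "\<bar>I k x\<bar> \<le> 1" for k x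
  proof -
    have "0 \<le> I k x" "I k x \<le> 1" unfolding I_def by (auto intro: prod_nonneg prod_le_1)
    then show ?thesis by simp
  qed
  interpret stopped: orthogonal_increments M F "\<lambda>k x. I k x * W k x"
    using bounded_transform[OF I_meas I_bounded] .
  let ?T = "\<lambda>x. \<Sum>k<n. I k x * W k x"
  have T_sq: "integrable M (\<lambda>x. (?T x)\<^sup>2)"
    and T_moment: "(\<integral>x. (?T x)\<^sup>2 \<partial>M) = (\<Sum>k<n. \<integral>x. (I k x * W k x)\<^sup>2 \<partial>M)"
    using stopped.partial_sum_pythagoras[of n] by auto
  have T_space: "?T \<in> borel_measurable M"
    using filtration_measurable_space[OF filtration conjunct1[OF stopped.partial_sum_pythagoras]] .
  have moment_le: "(\<Sum>k<n. \<integral>x. (I k x * W k x)\<^sup>2 \<partial>M) \<le> (\<Sum>k<n. \<integral>x. (W k x)\<^sup>2 \<partial>M)"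
    by (intro sum_mono integral_mono square_mult_bounded_factor_le[OF I_bounded]
        stopped.increment_square_integrable increment_square_integrable)
  have "(\<Union>i\<in>{..n}. {x\<in>space M. lam \<le> \<bar>\<Sum>k<i. W k x\<bar>}) \<subseteq> {x\<in>space M. lam\<^sup>2 \<le> (?T x)\<^sup>2}"
  proof
    fix x assume "x \<in> (\<Union>i\<in>{..n}. {x\<in>space M. lam \<le> \<bar>\<Sum>k<i. W k x\<bar>})"
    then obtain i where "x \<in> space M" "i \<le> n" "lam \<le> \<bar>\<Sum>k<i. W k x\<bar>" by auto
    then have "lam \<le> \<bar>?T x\<bar>" unfolding I_def using stopped_sum_reaches_level by auto
    then show "x \<in> {x\<in>space M. lam\<^sup>2 \<le> (?T x)\<^sup>2}" using power_mono[of lam "\<bar>?T x\<bar>" 2] lam \<open>x \<in> space M\<close> by simp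
  qed
  then have "measure M (\<Union>i\<in>{..n}. {x\<in>space M. lam \<le> \<bar>\<Sum>k<i. W k x\<bar>})
      \<le> measure M {x\<in>space M. lam\<^sup>2 \<le> (?T x)\<^sup>2}"
    by (rule finite_measure_mono) (use T_space in measurable)
  also have "\<dots> \<le> (\<integral>x. (?T x)\<^sup>2 \<partial>M) / lam\<^sup>2"
    by (rule integral_Markov_inequality_measure[OF T_sq, of "space M"]) (use lam in auto)
  also have "\<dots> \<le> (\<Sum>k<n. \<integral>x. (W k x)\<^sup>2 \<partial>M) / lam\<^sup>2"
    unfolding T_moment by (rule divide_right_mono[OF moment_le]) simp
  finally show ?thesis .
qed

lemma shifted: "orthogonal_increments M (\<lambda>k. F (m + k)) (\<lambda>k. W (m + k))"
proof
  show "filtration_of M (\<lambda>k. F (m + k))" using filtration unfolding filtration_of_def by auto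
  fix k
  show "W (m + k) \<in> borel_measurable (F (m + Suc k))" using increment_measurable[of "m + k"] by simp
  show "integrable M (\<lambda>x. (W (m + k) x)\<^sup>2)" by (rule increment_square_integrable)
  show "(\<integral>x. Z x * W (m + k) x \<partial>M) = 0"
    if "Z \<in> borel_measurable (F (m + k))" "integrable M (\<lambda>x. (Z x)\<^sup>2)" for Z
    using increment_orthogonal[OF that] .
qed

text \<open>If the second moments are summable, then almost surely some tail of the partial sums
  stays within \<open>lam\<close> of its starting point: the probability that the tail from \<open>m\<close> ever
  leaves the \<open>lam\<close>-window is at most the tail of the moment series divided by \<open>lam\<^sup>2\<close>.\<close>
lemma tail_sums_eventually_small:
  assumes summable: "summable (\<lambda>k. \<integral>x. (W k x)\<^sup>2 \<partial>M)" and lam: "lam > 0"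
  shows "AE x in M. \<exists>m. \<forall>i. \<bar>\<Sum>k<i. W (m + k) x\<bar> < lam"
proof -
  define exits where "exits m = (\<Union>i. {x\<in>space M. lam \<le> \<bar>\<Sum>k<i. W (m + k) x\<bar>})" for m
  define exits_by where
    "exits_by m n = (\<Union>i\<in>{..n}. {x\<in>space M. lam \<le> \<bar>\<Sum>k<i. W (m + k) x\<bar>})" for m n
  define bound where "bound m = (\<Sum>k. \<integral>x. (W (k + m) x)\<^sup>2 \<partial>M) / lam\<^sup>2" for m
  have exits_by_sets: "exits_by m n \<in> sets M" for m n
    unfolding exits_by_def using increment_measurable_space by measurable
  have exits_sets: "exits m \<in> sets M" for m
    unfolding exits_def using increment_measurable_space by measurable
  have bound_tendsto: "bound \<longlonglongrightarrow> 0"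
    unfolding bound_def using tendsto_divide_zero[OF suminf_exist_split2[OF summable]] by simp
  have exits_le: "measure M (exits m) \<le> bound m" for m
  proof -
    interpret tail: orthogonal_increments M "\<lambda>k. F (m + k)" "\<lambda>k. W (m + k)" by (rule shifted)
    have "summable (\<lambda>k. \<integral>x. (W (k + m) x)\<^sup>2 \<partial>M)"
      using summable summable_iff_shift[where f="\<lambda>k. \<integral>x. (W k x)\<^sup>2 \<partial>M" and k=m] by simp
    then have moments_le: "(\<Sum>k<n. \<integral>x. (W (m + k) x)\<^sup>2 \<partial>M) \<le> (\<Sum>k. \<integral>x. (W (k + m) x)\<^sup>2 \<partial>M)"
      for n unfolding add.commute[of m] by (intro sum_le_suminf) auto
    have exits_by_le: "measure M (exits_by m n) \<le> bound m" for n
      unfolding exits_by_def bound_def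
      by (rule order_trans[OF tail.kolmogorov_maximal_inequality[OF lam] divide_right_mono])
        (use moments_le in auto)
    have "(\<lambda>n. measure M (exits_by m n)) \<longlonglongrightarrow> measure M (\<Union>n. exits_by m n)"
      by (rule finite_Lim_measure_incseq)
        (use exits_by_sets in \<open>auto simp: exits_by_def incseq_def intro: order_trans\<close>)
    moreover have "(\<Union>n. exits_by m n) = exits m" unfolding exits_def exits_by_def by auto
    ultimately show ?thesis using exits_by_le by (intro LIMSEQ_le_const2) auto
  qed
  have never_small_sets: "(\<Inter>m. exits m) \<in> sets M" using exits_sets by auto
  have "measure M (\<Inter>m. exits m) \<le> measure M (exits m)" for m
    by (rule finite_measure_mono) (use exits_sets in auto)
  then have "measure M (\<Inter>m. exits m) \<le> 0"
    using exits_le by (intro LIMSEQ_le_const[OF bound_tendsto]) (auto intro: order_trans)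
  then have "measure M (\<Inter>m. exits m) = 0" using measure_nonneg[of M "\<Inter>m. exits m"] by linarith
  then have "(\<Inter>m. exits m) \<in> null_sets M"
    using never_small_sets by (intro null_setsI) (simp add: emeasure_eq_measure)
  then show ?thesis
    by (rule AE_I') (auto simp: exits_def not_less)
qed

lemma tail_sums_cauchy:
  assumes summable: "summable (\<lambda>k. \<integral>x. (W k x)\<^sup>2 \<partial>M)"
  shows "AE x in M. \<forall>e>0. \<exists>m. \<forall>j\<ge>m. \<bar>\<Sum>k\<in>{m..<j}. W k x\<bar> < e"
proof -
  have "AE x in M. \<forall>r::nat. \<exists>m. \<forall>i. \<bar>\<Sum>k<i. W (m + k) x\<bar> < 1 / Suc r"
    by (subst AE_all_countable) (intro allI tail_sums_eventually_small[OF summable]; simp)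
  then show ?thesis
  proof eventually_elim
    case (elim x)
    show ?case
    proof (intro allI impI)
      fix e :: real assume "e > 0"
      then obtain r where r: "1 / Suc r < e"
        using reals_Archimedean by (auto simp: inverse_eq_divide)
      then obtain m where m: "\<And>i. \<bar>\<Sum>k<i. W (m + k) x\<bar> < 1 / Suc r" using elim by blast
      have "\<bar>\<Sum>k\<in>{m..<j}. W k x\<bar> < e" if "j \<ge> m" for j
      proof -
        have "(\<Sum>k\<in>{m..<j}. W k x) = (\<Sum>k<j - m. W (m + k) x)"
          using sum.shift_bounds_nat_ivl[of "\<lambda>k. W k x" 0 m "j - m"] that
          by (simp add: atLeast0LessThan add.commute)
        then show ?thesis using m[of "j - m"] r by simp
      qed
      then show "\<exists>m. \<forall>j\<ge>m. \<bar>\<Sum>k\<in>{m..<j}. W k x\<bar> < e" by blast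
    qed
  qed
qed

end

text \<open>By conditional Jensen, conditioning does not increase the second moment.\<close>
lemma (in sigma_finite_subalgebra) real_cond_exp_second_moment_le:
  assumes f_int: "integrable M f" and f_sq: "integrable M (\<lambda>x. (f x)\<^sup>2)"
  shows "integrable M (\<lambda>x. (real_cond_exp M F f x)\<^sup>2)"
    and "(\<integral>x. (real_cond_exp M F f x)\<^sup>2 \<partial>M) \<le> (\<integral>x. (f x)\<^sup>2 \<partial>M)"
proof -
  show C_sq: "integrable M (\<lambda>x. (real_cond_exp M F f x)\<^sup>2)"
    by (rule integrable_convex_cond_exp[OF f_int, where I=UNIV])
      (auto simp: f_sq convex_power_even)
  have "AE x in M. (real_cond_exp M F f x)\<^sup>2 \<le> real_cond_exp M F (\<lambda>x. (f x)\<^sup>2) x"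
    by (rule real_cond_exp_jensens_inequality(2)[OF f_int, where I=UNIV])
      (auto simp: f_sq convex_power_even)
  then have "(\<integral>x. (real_cond_exp M F f x)\<^sup>2 \<partial>M) \<le> (\<integral>x. real_cond_exp M F (\<lambda>x. (f x)\<^sup>2) x \<partial>M)"
    by (intro integral_mono_AE C_sq real_cond_exp_int(1)[OF f_sq])
  also have "\<dots> = (\<integral>x. (f x)\<^sup>2 \<partial>M)" by (rule real_cond_exp_int(2)[OF f_sq])
  finally show "(\<integral>x. (real_cond_exp M F f x)\<^sup>2 \<partial>M) \<le> (\<integral>x. (f x)\<^sup>2 \<partial>M)" .
qed

context prob_space
begin

lemma compensated_increments_orthogonal:
  assumes filtration: "filtration_of M F"
    and D_meas: "\<And>k. D k \<in> borel_measurable (F (Suc k))"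
    and D_sq: "\<And>k. integrable M (\<lambda>x. (D k x)\<^sup>2)"
  shows "orthogonal_increments M F (\<lambda>k x. D k x - real_cond_exp M (F k) (D k) x)"
proof
  show "filtration_of M F" by (rule filtration)
  fix k
  interpret cond: sigma_finite_subalgebra M "F k"
    by (rule filtration_sigma_finite_subalgebra[OF filtration])
  let ?C = "real_cond_exp M (F k) (D k)"
  have D_space: "D k \<in> borel_measurable M"
    using filtration_measurable_space[OF filtration D_meas] .
  have C_sq: "integrable M (\<lambda>x. (?C x)\<^sup>2)"
    using cond.real_cond_exp_second_moment_le(1)[OF integrable_of_square_integrable D_sq]
      D_sq D_space by blast
  show "(\<lambda>x. D k x - ?C x) \<in> borel_measurable (F (Suc k))"
    using D_meas[of k] filtration_measurable_mono[OF filtration _ borel_measurable_cond_exp,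
        of k "Suc k"] by auto
  show "integrable M (\<lambda>x. (D k x - ?C x)\<^sup>2)"
    using square_integrable_diff[OF D_sq C_sq D_space borel_measurable_cond_exp2] by simp
  fix Z :: "'a \<Rightarrow> real"
  assume Z_meas: "Z \<in> borel_measurable (F k)" and Z_sq: "integrable M (\<lambda>x. (Z x)\<^sup>2)"
  have Z_space: "Z \<in> borel_measurable M" using filtration_measurable_space[OF filtration Z_meas] .
  have ZD_int: "integrable M (\<lambda>x. Z x * D k x)"
    using integrable_mult_of_square_integrable[OF Z_sq D_sq Z_space D_space] .
  have "integrable M (\<lambda>x. Z x * ?C x)" "(\<integral>x. Z x * ?C x \<partial>M) = (\<integral>x. Z x * D k x \<partial>M)"
    using cond.real_cond_exp_intg[OF ZD_int Z_meas D_space] by auto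
  then show "(\<integral>x. Z x * (D k x - ?C x) \<partial>M) = 0"
    using ZD_int by (simp add: right_diff_distrib)
qed

lemma compensated_second_moment_le:
  assumes filtration: "filtration_of M F"
    and D_meas: "D \<in> borel_measurable M"
    and D_sq: "integrable M (\<lambda>x. (D x)\<^sup>2)"
  shows "(\<integral>x. (D x - real_cond_exp M (F k) D x)\<^sup>2 \<partial>M) \<le> 4 * (\<integral>x. (D x)\<^sup>2 \<partial>M)"
proof -
  interpret cond: sigma_finite_subalgebra M "F k"
    by (rule filtration_sigma_finite_subalgebra[OF filtration])
  let ?C = "real_cond_exp M (F k) D"
  note C_moment = cond.real_cond_exp_second_moment_le[OF
      integrable_of_square_integrable[OF D_sq D_meas] D_sq]
  have pointwise: "(D x - ?C x)\<^sup>2 \<le> 2 * (D x)\<^sup>2 + 2 * (?C x)\<^sup>2" for x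
  proof -
    have "0 \<le> (D x + ?C x)\<^sup>2" by simp
    then show ?thesis by (simp add: power2_eq_square algebra_simps)
  qed
  have "(\<integral>x. (D x - ?C x)\<^sup>2 \<partial>M) \<le> (\<integral>x. 2 * (D x)\<^sup>2 + 2 * (?C x)\<^sup>2 \<partial>M)"
    by (rule integral_mono)
      (use D_sq C_moment(1) pointwise square_integrable_diff[OF D_sq C_moment(1) D_meas borel_measurable_cond_exp2] in auto)
  also have "\<dots> = 2 * (\<integral>x. (D x)\<^sup>2 \<partial>M) + 2 * (\<integral>x. (?C x)\<^sup>2 \<partial>M)"
    using D_sq C_moment(1) by simp
  finally show ?thesis using C_moment(2) by simp
qed

lemma compensated_tail_sums_cauchy:
  assumes filtration: "filtration_of M F"
    and D_meas: "\<And>k. D k \<in> borel_measurable (F (Suc k))"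
    and D_sq: "\<And>k. integrable M (\<lambda>x. (D k x)\<^sup>2)"
    and summable: "summable (\<lambda>k. \<integral>x. (D k x)\<^sup>2 \<partial>M)"
  shows "AE x in M. \<forall>e>0. \<exists>m. \<forall>j\<ge>m.
    \<bar>\<Sum>k\<in>{m..<j}. D k x - real_cond_exp M (F k) (D k) x\<bar> < e"
proof -
  interpret compensated: orthogonal_increments M F "\<lambda>k x. D k x - real_cond_exp M (F k) (D k) x"
    using compensated_increments_orthogonal[OF filtration D_meas D_sq] .
  have "summable (\<lambda>k. \<integral>x. (D k x - real_cond_exp M (F k) (D k) x)\<^sup>2 \<partial>M)"
  proof (rule summable_comparison_test)
    show "\<exists>N. \<forall>n\<ge>N. norm (\<integral>x. (D n x - real_cond_exp M (F n) (D n) x)\<^sup>2 \<partial>M)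
        \<le> 4 * (\<integral>x. (D n x)\<^sup>2 \<partial>M)"
      using compensated_second_moment_le[OF filtration
          filtration_measurable_space[OF filtration D_meas] D_sq] by auto
  qed (use summable in \<open>rule summable_mult\<close>)
  then show ?thesis by (rule compensated.tail_sums_cauchy)
qed

end

lemma square_summable_of_nn_integral_series:
  fixes f :: "nat \<Rightarrow> 'a \<Rightarrow> real"
  assumes meas: "\<And>k. f k \<in> borel_measurable M"
    and finite: "(\<Sum>k. \<integral>\<^sup>+ x. ennreal ((f k x)\<^sup>2) \<partial>M) < \<infinity>"
  shows "\<And>k. integrable M (\<lambda>x. (f k x)\<^sup>2)" and "summable (\<lambda>k. \<integral>x. (f k x)\<^sup>2 \<partial>M)"
proof -
  show square_int: "integrable M (\<lambda>x. (f k x)\<^sup>2)" for k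
    by (rule integrableI_bounded) (use meas ennreal_suminf_lessD[OF finite] in auto)
  have "(\<integral>\<^sup>+ x. ennreal ((f k x)\<^sup>2) \<partial>M) = ennreal (\<integral>x. (f k x)\<^sup>2 \<partial>M)" for k
    by (rule nn_integral_eq_integral[OF square_int]) auto
  then show "summable (\<lambda>k. \<integral>x. (f k x)\<^sup>2 \<partial>M)"
    using finite by (intro summable_suminf_not_top) auto
qed

lemma excursion_bound:
  fixes xi Y :: "nat \<Rightarrow> real"
  assumes start: "xi p < a" and c: "a \<le> c"
    and upcrossing: "\<And>k. p \<le> k \<Longrightarrow> xi k < a \<Longrightarrow> a < xi (Suc k) \<Longrightarrow> xi (Suc k) \<le> c"
    and step: "\<And>k. a \<le> xi k \<Longrightarrow> xi (Suc k) - xi k \<le> Y k"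
  shows "xi (p + d) < a \<or> (\<exists>q. p \<le> q \<and> q < p + d \<and> xi (Suc q) \<le> c \<and>
      xi (p + d) - xi (Suc q) \<le> (\<Sum>k\<in>{Suc q..<p + d}. Y k))"
proof (induction d)
  case 0
  then show ?case using start by simp
next
  case (Suc d)
  let ?n = "p + d"
  consider "xi (Suc ?n) < a" | "a \<le> xi (Suc ?n)" "xi ?n < a" | "a \<le> xi (Suc ?n)" "a \<le> xi ?n"
    by linarith
  then show ?case
  proof cases
    case 1
    then show ?thesis by simp
  next
    case 2
    then have "xi (Suc ?n) \<le> c" using upcrossing[of ?n] c by force
    then show ?thesis by (intro disjI2 exI[of _ ?n]) auto
  next
    case 3
    then obtain q where q: "p \<le> q" "q < ?n" "xi (Suc q) \<le> c"
      "xi ?n - xi (Suc q) \<le> (\<Sum>k\<in>{Suc q..<?n}. Y k)" using Suc.IH by auto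
    have "(\<Sum>k\<in>{Suc q..<Suc ?n}. Y k) = (\<Sum>k\<in>{Suc q..<?n}. Y k) + Y ?n"
      using q by (intro sum.atLeastLessThan_Suc) auto
    then show ?thesis using q step[OF \<open>a \<le> xi ?n\<close>] by (intro disjI2 exI[of _ q]) auto
  qed
qed

lemma cauchy_tail_sums_between:
  fixes Y :: "nat \<Rightarrow> real"
  assumes cauchy: "\<forall>e>0. \<exists>m. \<forall>j\<ge>m. \<bar>\<Sum>k\<in>{m..<j}. Y k\<bar> < e" and e: "e > 0"
  obtains m where "\<And>i j. m \<le> i \<Longrightarrow> i \<le> j \<Longrightarrow> \<bar>\<Sum>k\<in>{i..<j}. Y k\<bar> < e"
proof -
  obtain m where m: "\<And>j. m \<le> j \<Longrightarrow> \<bar>\<Sum>k\<in>{m..<j}. Y k\<bar> < e / 2"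
    using cauchy e by (meson half_gt_zero)
  have "\<bar>\<Sum>k\<in>{i..<j}. Y k\<bar> < e" if "m \<le> i" "i \<le> j" for i j
  proof -
    have "(\<Sum>k\<in>{m..<i}. Y k) + (\<Sum>k\<in>{i..<j}. Y k) = (\<Sum>k\<in>{m..<j}. Y k)"
      using that by (intro sum.atLeastLessThan_concat) auto
    then show ?thesis using m[of i] m[of j] that by linarith
  qed
  then show ?thesis by (rule that)
qed

lemma limsup_le_of_dominated_excursions:
  fixes xi Y :: "nat \<Rightarrow> real"
  assumes b: "b > 0"
    and step: "\<And>k. a \<le> xi k \<Longrightarrow> xi (Suc k) - xi k \<le> Y k"
    and cauchy: "\<forall>e>0. \<exists>m. \<forall>j\<ge>m. \<bar>\<Sum>k\<in>{m..<j}. Y k\<bar> < e"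
    and overshoot: "limsup (\<lambda>k. ereal ((if xi k < a \<and> a < xi (Suc k) then 1 else 0)
      * (xi (Suc k) - a))) \<le> ereal b"
    and below: "infinite {n. xi n < a}"
  shows "limsup (\<lambda>n. ereal (xi n)) \<le> ereal (a + b)"
proof (rule ereal_le_epsilon2)
  fix e' :: real assume "0 < e'"
  define e where "e = e' / 2"
  have e: "e > 0" using \<open>0 < e'\<close> by (simp add: e_def)
  have "eventually (\<lambda>k. ereal ((if xi k < a \<and> a < xi (Suc k) then 1 else 0) * (xi (Suc k) - a))
      < ereal (b + e)) sequentially"
    by (rule Limsup_lessD) (use overshoot e in \<open>simp add: order_le_less_trans\<close>)
  then obtain N where N: "\<And>k. N \<le> k \<Longrightarrow> xi k < a \<Longrightarrow> a < xi (Suc k) \<Longrightarrow> xi (Suc k) \<le> a + b + e"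
    unfolding eventually_sequentially by fastforce
  obtain m where tail_small: "\<And>i j. m \<le> i \<Longrightarrow> i \<le> j \<Longrightarrow> \<bar>\<Sum>k\<in>{i..<j}. Y k\<bar> < e"
    using cauchy_tail_sums_between[OF cauchy e] by blast
  obtain p where p: "max N m \<le> p" "xi p < a"
    using below unfolding infinite_nat_iff_unbounded_le by (metis mem_Collect_eq)
  have "xi (p + d) \<le> a + b + 2 * e" for d
  proof -
    have "xi (p + d) < a \<or> (\<exists>q. p \<le> q \<and> q < p + d \<and> xi (Suc q) \<le> a + b + e \<and>
        xi (p + d) - xi (Suc q) \<le> (\<Sum>k\<in>{Suc q..<p + d}. Y k))"
      by (rule excursion_bound) (use b e N p step in auto)
    then show ?thesis
    proof
      assume "xi (p + d) < a"
      then show ?thesis using b e by simp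
    next
      assume "\<exists>q. p \<le> q \<and> q < p + d \<and> xi (Suc q) \<le> a + b + e \<and>
        xi (p + d) - xi (Suc q) \<le> (\<Sum>k\<in>{Suc q..<p + d}. Y k)"
      then obtain q where "p \<le> q" "q < p + d" "xi (Suc q) \<le> a + b + e"
        "xi (p + d) - xi (Suc q) \<le> (\<Sum>k\<in>{Suc q..<p + d}. Y k)" by blast
      moreover have "\<bar>\<Sum>k\<in>{Suc q..<p + d}. Y k\<bar> < e"
        using calculation p(1) by (intro tail_small) auto
      ultimately show ?thesis by simp
    qed
  qed
  then have "\<forall>n\<ge>p. ereal (xi n) \<le> ereal (a + b) + ereal e'"
    by (auto simp: e_def dest!: le_Suc_ex)
  then show "limsup (\<lambda>n. ereal (xi n)) \<le> ereal (a + b) + ereal e'"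
    by (intro Limsup_bounded) (auto simp: eventually_sequentially)
qed

theorem mainTheorem4:
  fixes M :: "'a measure" and F :: "nat \<Rightarrow> 'a measure"
    and \<xi> :: "nat \<Rightarrow> 'a \<Rightarrow> real" and a b :: real
  assumes "prob_space M"
    and "filtration_of M F"
    and "adapted_to F \<xi>"
    and "b > 0"
    and "\<And>k. AE \<omega> in M. real_cond_exp M (F k)
            (\<lambda>x. (\<xi> (Suc k) x - \<xi> k x) * indicator {y. \<xi> k y \<ge> a} x) \<omega> \<le> 0"
    and "AE \<omega> in M. limsup (\<lambda>k. ereal (indicator {y. \<xi> k y < a \<and> a < \<xi> (Suc k) y} \<omega>
            * (\<xi> (Suc k) \<omega> - a))) \<le> ereal b"
    and "(\<Sum>k. \<integral>\<^sup>+ \<omega>. ennreal ((\<xi> (Suc k) \<omega> - \<xi> k \<omega>)\<^sup>2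
            * indicator {y. \<xi> k y \<ge> a} \<omega>) \<partial>M) < \<infinity>"
  shows "AE \<omega> in M. sign_switch_io \<xi> a \<omega> \<longrightarrow> limsup (\<lambda>n. ereal (\<xi> n \<omega>)) \<le> ereal (a + b)"
proof -
  interpret prob_space M by (rule assms(1))
  define D where "D k x = (\<xi> (Suc k) x - \<xi> k x) * indicator {y. \<xi> k y \<ge> a} x" for k x
  have \<xi>_meas: "\<xi> k \<in> borel_measurable (F k)" for k using assms(3) unfolding adapted_to_def by auto
  have D_meas: "D k \<in> borel_measurable (F (Suc k))" for k
    using \<xi>_meas[of "Suc k"] filtration_measurable_mono[OF assms(2) _ \<xi>_meas[of k], of "Suc k"]
    unfolding D_def by (simp add: indicator_def) measurable
  have "(\<integral>\<^sup>+ x. ennreal ((D k x)\<^sup>2) \<partial>M) = (\<integral>\<^sup>+ \<omega>. ennreal ((\<xi> (Suc k) \<omega> - \<xi> k \<omega>)\<^sup>2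
      * indicator {y. \<xi> k y \<ge> a} \<omega>) \<partial>M)" for k
    unfolding D_def by (intro nn_integral_cong) (auto simp: indicator_def)
  then have "(\<Sum>k. \<integral>\<^sup>+ x. ennreal ((D k x)\<^sup>2) \<partial>M) < \<infinity>"
    using assms(7) by simp
  note D_moments = square_summable_of_nn_integral_series[OF
      filtration_measurable_space[OF assms(2) D_meas] this]
  have "AE x in M. \<forall>e>0. \<exists>m. \<forall>j\<ge>m. \<bar>\<Sum>k\<in>{m..<j}. D k x - real_cond_exp M (F k) (D k) x\<bar> < e"
    using compensated_tail_sums_cauchy[OF assms(2) D_meas D_moments] .
  moreover have "AE x in M. \<forall>k. real_cond_exp M (F k) (D k) x \<le> 0"
    unfolding AE_all_countable D_def using assms(5) by auto
  ultimately show ?thesis using assms(6)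
  proof eventually_elim
    case (elim x)
    have "\<xi> (Suc k) x - \<xi> k x \<le> D k x - real_cond_exp M (F k) (D k) x" if "a \<le> \<xi> k x" for k
      using elim(2) that unfolding D_def by (auto simp: indicator_def)
    then show ?case
      using limsup_le_of_dominated_excursions[OF assms(4) _ elim(1), where xi="\<lambda>k. \<xi> k x"] elim(3)
      by (auto simp: sign_switch_io_def indicator_def of_bool_def)
  qed
qed

end
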